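(* Assume the loss $f(\cdot,z)$ is $\beta$-smooth for all $z\in\mathcal{Z}$, and consider full-batch GD with $T$ iterations and learning rates satisfying $\eta_t\le C/t\le1/\beta$ for all $t\le T+1$, with $\epsilon=\beta C<1$. Then $$|\epsilon_{\mathrm{gen}}|\le\left(\frac{8\sqrt3}{n}\sqrt{\log(eT)}\,(eT)^{\epsilon}+\frac{48}{n^2}\log(eT)\,(eT)^{2\epsilon}\right)\mathbb{E}[R_S(W_1)].$$
   Context: Let $\mathcal{D}$ be a distribution on $\mathcal{Z}$ and $z_1,\dots,z_n$ i.i.d. from $\mathcal{D}$; $S=(z_1,\dots,z_n)$. The loss $f:\mathbb{R}^d\times\mathcal{Z}\to[0,\infty)$ is non-negative and $\beta$-smooth ($\|\nabla f(w,z)-\nabla f(u,z)\|_2\le\beta\|w-u\|_2$), possibly nonconvex. $R(w)=\mathbb{E}_{Z\sim\mathcal{D}}[f(w,Z)]$, $R_S(w)=\frac1n\sum_j f(w,z_j)$. Full-batch GD: from a fixed initial point $W_1$, $W_{t+1}=W_t-\frac{\eta_t}{n}\sum_{j=1}^n\nabla f(W_t,z_j)$, $t=1,\dots,T$, output $A(S)=W_{T+1}$. Generalization error $\epsilon_{\mathrm{gen}}=\mathbb{E}[R(A(S))-R_S(A(S))]$. *)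

theory Defs
  imports "HOL-Probability.Probability"
begin

text \<open>Full-batch gradient descent. gd eta G n W1 S k is the iterate W_(k+1):
  gd ... 0 = W_1 and W_(t+1) = W_t - (eta t / n) * sum_j G W_t (S j), for t = k+1.
  G w z is the gradient of f(., z) at w.\<close>
primrec gd :: "(nat \<Rightarrow> real) \<Rightarrow> ('w::real_vector \<Rightarrow> 'z \<Rightarrow> 'w) \<Rightarrow> nat \<Rightarrow> 'w \<Rightarrow> (nat \<Rightarrow> 'z) \<Rightarrow> nat \<Rightarrow> 'w"
where
  "gd eta G n W1 S 0 = W1"
| "gd eta G n W1 S (Suc k) =
     gd eta G n W1 S k - (eta (Suc k) / real n) *\<^sub>R (\<Sum>j<n. G (gd eta G n W1 S k) (S j))"

definition pop_risk :: "'z measure \<Rightarrow> ('w \<Rightarrow> 'z \<Rightarrow> real) \<Rightarrow> 'w \<Rightarrow> real" where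
  "pop_risk D f w = (\<integral>z. f w z \<partial>D)"

definition emp_risk :: "nat \<Rightarrow> ('w \<Rightarrow> 'z \<Rightarrow> real) \<Rightarrow> (nat \<Rightarrow> 'z) \<Rightarrow> 'w \<Rightarrow> real" where
  "emp_risk n f S w = (\<Sum>j<n. f w (S j)) / real n"

definition sample_measure :: "'z measure \<Rightarrow> nat \<Rightarrow> (nat \<Rightarrow> 'z) measure" where
  "sample_measure D n = PiM {..<n} (\<lambda>_. D)"

end

(*
  A ghost point z' independent of the sample turns the expected generalization gap into
  the average over i of E[f(A(S_i), z_i) - f(A(S), z_i)], where S_i is S with z_i replaced by z'.
  For a non-negative beta-smooth loss, |f(w', z) - f(w, z)| <= mu f(w, z) + beta (1/mu + 1)/2 |w' - w|^2
  for every mu > 0, because |grad f(w, z)|^2 <= 2 beta f(w, z).  Along gradient descent the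
  replace-one perturbation is multiplied by at most 1 + beta eta_t per step and receives at most
  eta_t/n (|grad f(W_t, z_i)| + |grad f(W'_t, z')|) per step; by Cauchy-Schwarz, |W'_T - W_T|^2 is
  then bounded by losses along both trajectories.  Since gradient descent with beta eta_t <= 1 does
  not increase the empirical risk, all these losses have expectation at most E[R_S(W_1)], so
  |gap| <= (mu + (1/mu + 1) (2 X / n)^2) E[R_S(W_1)] with X = prod_t (1 + beta eta_t) - 1 <= (eT)^(beta C).
  The choice mu = 2 (eT)^(beta C) / n gives the bound.
*)

theory Submission
  imports Defs
begin

section \<open>Functions with Lipschitz gradient\<close>

lemma lipschitz_gradient_taylor_bound:
  fixes F :: "'a::real_inner \<Rightarrow> real" and g :: "'a \<Rightarrow> 'a"
  assumes deriv: "\<And>w. (F has_derivative (\<lambda>h. g w \<bullet> h)) (at w)"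
    and lip: "\<And>w u. norm (g w - g u) \<le> b * norm (w - u)"
  shows "\<bar>F y - F x - g x \<bullet> (y - x)\<bar> \<le> b / 2 * (norm (y - x))\<^sup>2"
proof -
  define h where "h = y - x"
  have deriv_line: "((\<lambda>t. F (x + t *\<^sub>R h)) has_real_derivative (g (x + t *\<^sub>R h) \<bullet> h)) (at t)" for t
  proof -
    have "((\<lambda>t. F (x + t *\<^sub>R h)) has_derivative (\<lambda>s. g (x + t *\<^sub>R h) \<bullet> (s *\<^sub>R h))) (at t)"
      by (rule has_derivative_compose[OF _ deriv]) (auto intro!: derivative_eq_intros)
    then show ?thesis
      by (simp add: has_field_derivative_def mult_commute_abs)
  qed
  have slope_dev: "\<bar>g (x + t *\<^sub>R h) \<bullet> h - g x \<bullet> h\<bar> \<le> b * t * (norm h)\<^sup>2" if "0 \<le> t" for t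
  proof -
    have "\<bar>g (x + t *\<^sub>R h) \<bullet> h - g x \<bullet> h\<bar> \<le> norm (g (x + t *\<^sub>R h) - g x) * norm h"
      unfolding inner_diff_left[symmetric] by (rule Cauchy_Schwarz_ineq2)
    also have "\<dots> \<le> b * norm (t *\<^sub>R h) * norm h"
      using lip[of "x + t *\<^sub>R h" x] by (intro mult_right_mono) auto
    finally show ?thesis using that by (simp add: power2_eq_square)
  qed
  define lower where "lower t = F (x + t *\<^sub>R h) - t * (g x \<bullet> h) - b / 2 * t\<^sup>2 * (norm h)\<^sup>2" for t
  define upper where "upper t = F (x + t *\<^sub>R h) - t * (g x \<bullet> h) + b / 2 * t\<^sup>2 * (norm h)\<^sup>2" for t
  have "lower 1 \<le> lower 0"
  proof (rule DERIV_nonpos_imp_nonincreasing[of 0 1])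
    fix t :: real assume t: "0 \<le> t" "t \<le> 1"
    show "\<exists>y. (lower has_real_derivative y) (at t) \<and> y \<le> 0"
      unfolding lower_def
      by (rule exI, rule conjI, (rule derivative_eq_intros deriv_line refl)+)
         (use slope_dev[OF t(1)] in \<open>auto simp: abs_le_iff mult.commute mult.left_commute\<close>)
  qed simp
  moreover have "upper 0 \<le> upper 1"
  proof (rule DERIV_nonneg_imp_nondecreasing[of 0 1])
    fix t :: real assume t: "0 \<le> t" "t \<le> 1"
    show "\<exists>y. (upper has_real_derivative y) (at t) \<and> 0 \<le> y"
      unfolding upper_def
      by (rule exI, rule conjI, (rule derivative_eq_intros deriv_line refl)+)
         (use slope_dev[OF t(1)] in \<open>auto simp: abs_le_iff mult.commute mult.left_commute\<close>)
  qed simp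
  ultimately have "F y - F x - g x \<bullet> (y - x) \<le> b / 2 * (norm (y - x))\<^sup>2"
      "- (b / 2 * (norm (y - x))\<^sup>2) \<le> F y - F x - g x \<bullet> (y - x)"
    unfolding lower_def upper_def h_def by simp_all
  then show ?thesis by (intro abs_leI) linarith+
qed

lemma lipschitz_gradient_upper_bound:
  fixes F :: "'a::real_inner \<Rightarrow> real" and g :: "'a \<Rightarrow> 'a"
  assumes "\<And>w. (F has_derivative (\<lambda>h. g w \<bullet> h)) (at w)"
    and "\<And>w u. norm (g w - g u) \<le> b * norm (w - u)"
  shows "F y \<le> F x + g x \<bullet> (y - x) + b / 2 * (norm (y - x))\<^sup>2"
  using lipschitz_gradient_taylor_bound[OF assms, of y x] by linarith

lemma nonneg_quadratic_upper_bound_gradient: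
  fixes F :: "'a::real_inner \<Rightarrow> real" and g :: "'a \<Rightarrow> 'a"
  assumes upper: "\<And>y. F y \<le> F x + g x \<bullet> (y - x) + b / 2 * (norm (y - x))\<^sup>2"
    and nonneg: "\<And>y. 0 \<le> F y" and b: "b > 0"
  shows "(norm (g x))\<^sup>2 \<le> 2 * b * F x"
proof -
  have "0 \<le> F (x - (1 / b) *\<^sub>R g x)" by (rule nonneg)
  also have "\<dots> \<le> F x - (1 / b) * (norm (g x))\<^sup>2 + b / 2 * ((1 / b)\<^sup>2 * (norm (g x))\<^sup>2)"
    using upper[of "x - (1 / b) *\<^sub>R g x"] b
    by (simp add: power2_norm_eq_inner[symmetric] power_divide)
  also have "\<dots> = F x - (norm (g x))\<^sup>2 / (2 * b)"
    using b by (simp add: field_simps power2_eq_square)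
  finally show ?thesis using b by (simp add: field_simps)
qed

lemma mult_le_weighted_squares:
  fixes a d lam :: real
  assumes "lam > 0"
  shows "a * d \<le> lam / 2 * a\<^sup>2 + d\<^sup>2 / (2 * lam)"
proof -
  have "0 \<le> (lam * a - d)\<^sup>2" by simp
  then have "2 * lam * (a * d) \<le> lam\<^sup>2 * a\<^sup>2 + d\<^sup>2"
    by (simp add: power2_diff algebra_simps)
  then show ?thesis using assms by (simp add: field_simps power2_eq_square)
qed

locale nonneg_smooth =
  fixes F :: "'a::real_inner \<Rightarrow> real" and g :: "'a \<Rightarrow> 'a" and b :: real
  assumes deriv: "\<And>w. (F has_derivative (\<lambda>h. g w \<bullet> h)) (at w)"
    and lip: "\<And>w u. norm (g w - g u) \<le> b * norm (w - u)"
    and nonneg: "\<And>w. 0 \<le> F w"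
    and b_pos: "b > 0"
begin

lemma norm_gradient_sq_le: "(norm (g x))\<^sup>2 \<le> 2 * b * F x"
  by (rule nonneg_quadratic_upper_bound_gradient[where F=F and g=g,
        OF lipschitz_gradient_upper_bound[OF deriv lip] nonneg b_pos])

lemma le_twice_plus_dist_sq: "F y \<le> 2 * F x + b * (norm (y - x))\<^sup>2"
proof -
  have "F y \<le> F x + norm (g x) * norm (y - x) + b / 2 * (norm (y - x))\<^sup>2"
    using lipschitz_gradient_upper_bound[OF deriv lip, of y x] Cauchy_Schwarz_ineq2[of "g x" "y - x"]
    by linarith
  also have "norm (g x) * norm (y - x) \<le> (norm (g x))\<^sup>2 / (2 * b) + b / 2 * (norm (y - x))\<^sup>2"
    using mult_le_weighted_squares[of "1 / b" "norm (g x)" "norm (y - x)"] b_pos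
    by (simp add: mult.commute)
  also have "(norm (g x))\<^sup>2 / (2 * b) \<le> F x"
    using norm_gradient_sq_le[of x] b_pos by (simp add: field_simps)
  finally show ?thesis by simp
qed

lemma abs_diff_le:
  assumes mu: "mu > 0"
  shows "\<bar>F y - F x\<bar> \<le> mu * F x + b * (1 / mu + 1) / 2 * (norm (y - x))\<^sup>2"
proof -
  have "\<bar>F y - F x\<bar> \<le> norm (g x) * norm (y - x) + b / 2 * (norm (y - x))\<^sup>2"
    using lipschitz_gradient_taylor_bound[OF deriv lip, of y x] Cauchy_Schwarz_ineq2[of "g x" "y - x"]
    by linarith
  also have "norm (g x) * norm (y - x) \<le> mu / b / 2 * (norm (g x))\<^sup>2 + (norm (y - x))\<^sup>2 / (2 * (mu / b))"
    using mult_le_weighted_squares[of "mu / b"] mu b_pos by simp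
  also have "mu / b / 2 * (norm (g x))\<^sup>2 \<le> mu * F x"
    using norm_gradient_sq_le[of x] mu b_pos by (simp add: field_simps)
  finally show ?thesis
    using mu b_pos by (simp add: field_simps)
qed

end

section \<open>Joint measurability\<close>

definition grid_round :: "nat \<Rightarrow> 'a::euclidean_space \<Rightarrow> 'a" where
  "grid_round m w = (\<Sum>b\<in>Basis. (real_of_int \<lfloor>real (Suc m) * (w \<bullet> b)\<rfloor> / real (Suc m)) *\<^sub>R b)"

lemma grid_round_tendsto: "(\<lambda>m. grid_round m w) \<longlonglongrightarrow> w"
proof -
  have coord: "(\<lambda>m. real_of_int \<lfloor>real (Suc m) * a\<rfloor> / real (Suc m)) \<longlonglongrightarrow> a" for a :: real
  proof (rule real_tendsto_sandwich)
    show "\<forall>\<^sub>F m in sequentially. a - inverse (real (Suc m)) \<le> real_of_int \<lfloor>real (Suc m) * a\<rfloor> / real (Suc m)"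
    proof (intro always_eventually allI)
      fix m
      have "real (Suc m) * a - 1 \<le> real_of_int \<lfloor>real (Suc m) * a\<rfloor>" by linarith
      then have "(real (Suc m) * a - 1) / real (Suc m) \<le> real_of_int \<lfloor>real (Suc m) * a\<rfloor> / real (Suc m)"
        by (rule divide_right_mono) auto
      moreover have "a - inverse (real (Suc m)) = (real (Suc m) * a - 1) / real (Suc m)"
        by (simp add: field_simps)
      ultimately show "a - inverse (real (Suc m)) \<le> real_of_int \<lfloor>real (Suc m) * a\<rfloor> / real (Suc m)"
        by simp
    qed
    show "\<forall>\<^sub>F m in sequentially. real_of_int \<lfloor>real (Suc m) * a\<rfloor> / real (Suc m) \<le> a"
    proof (intro always_eventually allI)
      fix m
      have "real_of_int \<lfloor>real (Suc m) * a\<rfloor> \<le> real (Suc m) * a" by linarith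
      then show "real_of_int \<lfloor>real (Suc m) * a\<rfloor> / real (Suc m) \<le> a"
        by (simp add: field_simps)
    qed
    show "(\<lambda>m. a - inverse (real (Suc m))) \<longlonglongrightarrow> a"
      using tendsto_diff[OF tendsto_const LIMSEQ_inverse_real_of_nat, of a] by simp
  qed simp
  have "(\<lambda>m. grid_round m w) \<longlonglongrightarrow> (\<Sum>b\<in>Basis. (w \<bullet> b) *\<^sub>R b)"
    unfolding grid_round_def by (intro tendsto_intros coord)
  then show ?thesis by (simp add: euclidean_representation)
qed

lemma grid_round_measurable[measurable]: "grid_round m \<in> borel_measurable borel"
  unfolding grid_round_def by measurable

lemma countable_range_grid_round: "countable (range (grid_round m :: 'a::euclidean_space \<Rightarrow> 'a))"
proof -
  let ?point = "\<lambda>k. (\<Sum>b\<in>(Basis::'a set). (real_of_int (k b) / real (Suc m)) *\<^sub>R b)"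
  have "range (grid_round m :: 'a \<Rightarrow> 'a) \<subseteq> ?point ` (Basis \<rightarrow>\<^sub>E (UNIV :: int set))"
  proof
    fix x assume "x \<in> range (grid_round m :: 'a \<Rightarrow> 'a)"
    then obtain w where x: "x = grid_round m w" by auto
    show "x \<in> ?point ` (Basis \<rightarrow>\<^sub>E (UNIV :: int set))"
      unfolding x grid_round_def
      by (rule image_eqI[where x="restrict (\<lambda>b. \<lfloor>real (Suc m) * (w \<bullet> b)\<rfloor>) Basis"])
         (auto intro!: sum.cong)
  qed
  moreover have "countable (?point ` (Basis \<rightarrow>\<^sub>E (UNIV :: int set)))"
    by (intro countable_image countable_PiE) auto
  ultimately show ?thesis by (rule countable_subset)
qed

text \<open>\<open>h\<close> is the pointwise limit of its compositions with the grid roundings, each of which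
  takes only countably many values in the first argument.\<close>

lemma borel_measurable_continuous_measurable_pair:
  fixes h :: "'a::euclidean_space \<Rightarrow> 'z \<Rightarrow> 'b::metric_space"
  assumes cont: "\<And>z. continuous_on UNIV (\<lambda>w. h w z)"
    and meas: "\<And>w. (\<lambda>z. h w z) \<in> borel_measurable M"
  shows "(\<lambda>x. h (fst x) (snd x)) \<in> borel_measurable (borel \<Otimes>\<^sub>M M)"
proof (rule borel_measurable_LIMSEQ_metric)
  fix m
  show "(\<lambda>x. h (grid_round m (fst x)) (snd x)) \<in> borel_measurable (borel \<Otimes>\<^sub>M M)"
  proof (rule measurable_compose_countable'[OF _ _ countable_range_grid_round])
    fix c
    show "(\<lambda>x. h c (snd x)) \<in> borel_measurable (borel \<Otimes>\<^sub>M M)"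
      using meas[of c] by measurable
  next
    have "(\<lambda>x. grid_round m (fst x)) -` {a} \<inter> space (borel \<Otimes>\<^sub>M M) \<in> sets (borel \<Otimes>\<^sub>M M)"
      for a :: 'a
    proof -
      have "{x \<in> space (borel \<Otimes>\<^sub>M M). grid_round m (fst x) = a} \<in> sets (borel \<Otimes>\<^sub>M M)"
        by measurable
      then show ?thesis by (simp add: vimage_def Int_def conj_commute)
    qed
    then show "(\<lambda>x. grid_round m (fst x)) \<in> measurable (borel \<Otimes>\<^sub>M M) (count_space (range (grid_round m)))"
      unfolding measurable_count_space_eq_countable[OF countable_range_grid_round] by auto
  qed
next
  fix x :: "'a \<times> 'z"
  have "isCont (\<lambda>w. h w (snd x)) (fst x)"
    using cont[of "snd x"] by (simp add: continuous_on_eq_continuous_at)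
  then show "(\<lambda>m. h (grid_round m (fst x)) (snd x)) \<longlonglongrightarrow> h (fst x) (snd x)"
    by (rule isCont_tendsto_compose) (rule grid_round_tendsto)
qed

lemma borel_measurable_gradient:
  fixes F :: "'a::euclidean_space \<Rightarrow> 'z \<Rightarrow> real" and g :: "'a \<Rightarrow> 'z \<Rightarrow> 'a"
  assumes deriv: "\<And>w z. ((\<lambda>v. F v z) has_derivative (\<lambda>h. g w z \<bullet> h)) (at w)"
    and meas: "\<And>w. (\<lambda>z. F w z) \<in> borel_measurable M"
  shows "(\<lambda>z. g w z) \<in> borel_measurable M"
proof -
  have coord: "(\<lambda>z. g w z \<bullet> b) \<in> borel_measurable M" for b
  proof (rule borel_measurable_LIMSEQ_real)
    fix z
    have "((\<lambda>t. F (w + t *\<^sub>R b) z) has_derivative (\<lambda>s. g (w + 0 *\<^sub>R b) z \<bullet> (s *\<^sub>R b))) (at 0)"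
      by (rule has_derivative_compose[OF _ deriv]) (auto intro!: derivative_eq_intros)
    then have "((\<lambda>t. F (w + t *\<^sub>R b) z) has_real_derivative (g w z \<bullet> b)) (at 0)"
      by (simp add: has_field_derivative_def mult_commute_abs)
    then have "(\<lambda>t. (F (w + t *\<^sub>R b) z - F w z) / t) \<midarrow>0\<rightarrow> g w z \<bullet> b"
      unfolding DERIV_def by simp
    then show "(\<lambda>m. (F (w + inverse (real (Suc m)) *\<^sub>R b) z - F w z) / inverse (real (Suc m)))
        \<longlonglongrightarrow> g w z \<bullet> b"
      using LIMSEQ_inverse_real_of_nat by (subst (asm) LIMSEQ_SEQ_conv[symmetric]) auto
  next
    fix m
    show "(\<lambda>z. (F (w + inverse (real (Suc m)) *\<^sub>R b) z - F w z) / inverse (real (Suc m)))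
        \<in> borel_measurable M"
      using meas by measurable
  qed
  have "(\<lambda>z. \<Sum>b\<in>Basis. (g w z \<bullet> b) *\<^sub>R b) \<in> borel_measurable M"
    using coord by measurable
  then show ?thesis by (simp add: euclidean_representation)
qed

section \<open>Replace-one symmetry of i.i.d. samples\<close>

lemma
  fixes h :: "('i \<Rightarrow> 'a) \<Rightarrow> real"
  assumes D: "prob_space D" and i: "i \<in> I" and j: "j \<in> I"
  defines "swap_ij \<equiv> \<lambda>S. \<lambda>k\<in>I. S (Transposition.transpose i j k)"
  shows integral_PiM_transpose:
      "h \<in> borel_measurable (PiM I (\<lambda>_. D)) \<Longrightarrow>
       (\<integral>S. h (swap_ij S) \<partial>PiM I (\<lambda>_. D)) = (\<integral>S. h S \<partial>PiM I (\<lambda>_. D))"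
    and integrable_PiM_transpose:
      "integrable (PiM I (\<lambda>_. D)) h \<Longrightarrow> integrable (PiM I (\<lambda>_. D)) (\<lambda>S. h (swap_ij S))"
proof -
  have swap_meas: "swap_ij \<in> measurable (PiM I (\<lambda>_. D)) (PiM I (\<lambda>_. D))"
    unfolding swap_ij_def using i j
    by (intro measurable_restrict measurable_component_singleton) (auto simp: Transposition.transpose_def)
  have "inj_on (Transposition.transpose i j) I" "Transposition.transpose i j \<in> I \<rightarrow> I"
    using i j by (auto simp: Transposition.transpose_def inj_on_def)
  then have distr_eq: "distr (PiM I (\<lambda>_. D)) (PiM I (\<lambda>_. D)) swap_ij = PiM I (\<lambda>_. D)"
    using distr_PiM_reindex[of I "\<lambda>_. D" "Transposition.transpose i j" I] D
    unfolding swap_ij_def by simp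
  show "h \<in> borel_measurable (PiM I (\<lambda>_. D)) \<Longrightarrow>
      (\<integral>S. h (swap_ij S) \<partial>PiM I (\<lambda>_. D)) = (\<integral>S. h S \<partial>PiM I (\<lambda>_. D))"
    using integral_distr[OF swap_meas] distr_eq by metis
  show "integrable (PiM I (\<lambda>_. D)) h \<Longrightarrow> integrable (PiM I (\<lambda>_. D)) (\<lambda>S. h (swap_ij S))"
    using integrable_distr_eq[OF swap_meas borel_measurable_integrable] distr_eq by metis
qed

lemma
  fixes g :: "('i \<Rightarrow> 'a) \<Rightarrow> real"
  assumes D: "prob_space D" and J: "J \<subseteq> I" "finite I"
    and g: "g \<in> borel_measurable (PiM J (\<lambda>_. D))"
    and local: "\<And>S. g (restrict S J) = g S"
  shows integral_PiM_subset: "(\<integral>S. g S \<partial>PiM J (\<lambda>_. D)) = (\<integral>S. g S \<partial>PiM I (\<lambda>_. D))"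
    and integrable_PiM_subset_iff: "integrable (PiM J (\<lambda>_. D)) g \<longleftrightarrow> integrable (PiM I (\<lambda>_. D)) g"
proof -
  interpret product_prob_space "\<lambda>_. D" UNIV
    using D by (simp add: product_prob_space_def product_prob_space_axioms_def product_sigma_finite_def
        prob_space_imp_sigma_finite)
  have restrict_meas: "(\<lambda>S. restrict S J) \<in> measurable (PiM I (\<lambda>_. D)) (PiM J (\<lambda>_. D))"
    using J(1) by (rule measurable_restrict_subset)
  have distr_eq: "PiM J (\<lambda>_. D) = distr (PiM I (\<lambda>_. D)) (PiM J (\<lambda>_. D)) (\<lambda>S. restrict S J)"
    using J by (rule distr_restrict)
  show "(\<integral>S. g S \<partial>PiM J (\<lambda>_. D)) = (\<integral>S. g S \<partial>PiM I (\<lambda>_. D))"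
    by (subst distr_eq) (simp add: integral_distr[OF restrict_meas g] local)
  show "integrable (PiM J (\<lambda>_. D)) g \<longleftrightarrow> integrable (PiM I (\<lambda>_. D)) g"
    by (subst distr_eq) (simp add: integrable_distr_eq[OF restrict_meas g] local)
qed

text \<open>The sample \<open>S 0, \<dots>, S (n - 1)\<close> together with an independent ghost point \<open>S n\<close>, which
  plays the role of the fresh test point in the population risk.\<close>

definition ghost_sample_measure :: "'z measure \<Rightarrow> nat \<Rightarrow> (nat \<Rightarrow> 'z) measure" where
  "ghost_sample_measure D n = PiM (insert n {..<n}) (\<lambda>_. D)"

lemma
  fixes f :: "'w \<Rightarrow> 'z \<Rightarrow> real" and A :: "(nat \<Rightarrow> 'z) \<Rightarrow> 'w"
  assumes D: "prob_space D"
    and f_meas: "(\<lambda>x. f (fst x) (snd x)) \<in> borel_measurable (N \<Otimes>\<^sub>M D)"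
    and A_meas: "A \<in> measurable (sample_measure D n) N"
    and A_local: "\<And>S S'. (\<And>j. j < n \<Longrightarrow> S j = S' j) \<Longrightarrow> A S = A S'"
    and integrable: "integrable (ghost_sample_measure D n) (\<lambda>S. f (A S) (S n))"
  shows integrable_pop_risk_sample:
      "integrable (sample_measure D n) (\<lambda>S. pop_risk D f (A S))"
    and integral_pop_risk_ghost_sample:
      "(\<integral>S. pop_risk D f (A S) \<partial>sample_measure D n)
         = (\<integral>S. f (A S) (S n) \<partial>ghost_sample_measure D n)"
proof -
  let ?P = "sample_measure D n" and ?Q = "ghost_sample_measure D n"
  let ?h = "\<lambda>S. f (A S) (S n)" and ?insert = "\<lambda>(x, S). S(n := x)"
  interpret D: prob_space D by (rule D)
  interpret P: prob_space ?P
    unfolding sample_measure_def using D by (rule prob_space_PiM)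
  interpret DP: pair_sigma_finite D ?P
    by (simp add: pair_sigma_finite_def D.sigma_finite_measure_axioms P.sigma_finite_measure_axioms)
  have insert_meas: "?insert \<in> measurable (D \<Otimes>\<^sub>M ?P) ?Q"
    unfolding sample_measure_def ghost_sample_measure_def
    using measurable_compose[OF measurable_Pair[OF measurable_snd measurable_fst]
        measurable_add_dim[of n "{..<n}" "\<lambda>_. D"]]
    by (simp add: case_prod_beta')
  have distr_insert: "distr (D \<Otimes>\<^sub>M ?P) ?Q ?insert = ?Q"
    using distr_pair_PiM_eq_PiM[of "{..<n}" "\<lambda>_. D" n] D
    by (simp add: sample_measure_def ghost_sample_measure_def)
  have h_meas: "?h \<in> borel_measurable ?Q"
    using borel_measurable_integrable[OF integrable] .
  have A_insert: "A (S(n := x)) = A S" for S x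
    by (rule A_local) simp
  then have h_insert: "?h (?insert p) = (case p of (x, S) \<Rightarrow> f (A S) x)" for p
    by (cases p) simp
  have integrable_pair: "integrable (D \<Otimes>\<^sub>M ?P) (\<lambda>(x, S). f (A S) x)"
    using integrable_distr_eq[OF insert_meas h_meas] integrable distr_insert by (simp add: h_insert)
  show "integrable ?P (\<lambda>S. pop_risk D f (A S))"
    using DP.integrable_snd[OF integrable_pair] by (simp add: pop_risk_def)
  have "(\<integral>S. pop_risk D f (A S) \<partial>?P) = (\<integral>p. ?h (?insert p) \<partial>(D \<Otimes>\<^sub>M ?P))"
    using DP.integral_snd[OF integrable_pair] by (simp add: pop_risk_def A_insert case_prod_beta')
  also have "\<dots> = (\<integral>S. ?h S \<partial>?Q)"
    using integral_distr[OF insert_meas h_meas] distr_insert by simp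
  finally show "(\<integral>S. pop_risk D f (A S) \<partial>?P) = (\<integral>S. ?h S \<partial>?Q)" .
qed

lemma
  fixes g :: "(nat \<Rightarrow> 'z) \<Rightarrow> 'z \<Rightarrow> real"
  assumes D: "prob_space D" and i: "i < n"
    and g_local: "\<And>S S' z. (\<And>j. j < n \<Longrightarrow> S j = S' j) \<Longrightarrow> g S z = g S' z"
  shows integral_replace_one_eval_own:
      "(\<lambda>S. g S (S n)) \<in> borel_measurable (ghost_sample_measure D n) \<Longrightarrow>
       (\<integral>S. g (S(i := S n)) (S i) \<partial>ghost_sample_measure D n)
         = (\<integral>S. g S (S n) \<partial>ghost_sample_measure D n)"
    and integrable_replace_one_eval_own:
      "integrable (ghost_sample_measure D n) (\<lambda>S. g S (S n)) \<Longrightarrow>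
       integrable (ghost_sample_measure D n) (\<lambda>S. g (S(i := S n)) (S i))"
    and integral_replace_one_eval_ghost:
      "(\<lambda>S. g S (S i)) \<in> borel_measurable (ghost_sample_measure D n) \<Longrightarrow>
       (\<integral>S. g (S(i := S n)) (S n) \<partial>ghost_sample_measure D n)
         = (\<integral>S. g S (S i) \<partial>ghost_sample_measure D n)"
    and integrable_replace_one_eval_ghost:
      "integrable (ghost_sample_measure D n) (\<lambda>S. g S (S i)) \<Longrightarrow>
       integrable (ghost_sample_measure D n) (\<lambda>S. g (S(i := S n)) (S n))"
proof -
  let ?swap = "\<lambda>S. \<lambda>k\<in>insert n {..<n}. S (Transposition.transpose i n k)"
  have swap_g: "g (?swap S) = g (S(i := S n))" for S
    using i by (intro ext g_local) (auto simp: Transposition.transpose_def)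
  note transpose = integral_PiM_transpose[OF D, of i "insert n {..<n}" n]
    integrable_PiM_transpose[OF D, of i "insert n {..<n}" n]
  note own = transpose[where h="\<lambda>S. g S (S n)"] and ghost = transpose[where h="\<lambda>S. g S (S i)"]
  show "(\<lambda>S. g S (S n)) \<in> borel_measurable (ghost_sample_measure D n) \<Longrightarrow>
      (\<integral>S. g (S(i := S n)) (S i) \<partial>ghost_sample_measure D n)
        = (\<integral>S. g S (S n) \<partial>ghost_sample_measure D n)"
    and "integrable (ghost_sample_measure D n) (\<lambda>S. g S (S n)) \<Longrightarrow>
      integrable (ghost_sample_measure D n) (\<lambda>S. g (S(i := S n)) (S i))"
    using own i by (simp_all add: swap_g ghost_sample_measure_def)
  show "(\<lambda>S. g S (S i)) \<in> borel_measurable (ghost_sample_measure D n) \<Longrightarrow>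
      (\<integral>S. g (S(i := S n)) (S n) \<partial>ghost_sample_measure D n)
        = (\<integral>S. g S (S i) \<partial>ghost_sample_measure D n)"
    and "integrable (ghost_sample_measure D n) (\<lambda>S. g S (S i)) \<Longrightarrow>
      integrable (ghost_sample_measure D n) (\<lambda>S. g (S(i := S n)) (S n))"
    using ghost i by (simp_all add: swap_g ghost_sample_measure_def)
qed

lemma
  fixes f :: "'w \<Rightarrow> 'z \<Rightarrow> real" and A :: "(nat \<Rightarrow> 'z) \<Rightarrow> 'w"
  assumes D: "prob_space D"
    and f_meas: "(\<lambda>x. f (fst x) (snd x)) \<in> borel_measurable (N \<Otimes>\<^sub>M D)"
    and A_meas: "A \<in> measurable (sample_measure D n) N"
    and A_local: "\<And>S S'. (\<And>j. j < n \<Longrightarrow> S j = S' j) \<Longrightarrow> A S = A S'"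
    and integrable: "\<And>j. j < n \<Longrightarrow> integrable (ghost_sample_measure D n) (\<lambda>S. f (A S) (S j))"
  shows integrable_emp_risk_sample: "integrable (sample_measure D n) (\<lambda>S. emp_risk n f S (A S))"
    and integral_emp_risk_sample:
      "(\<integral>S. emp_risk n f S (A S) \<partial>sample_measure D n)
         = (\<Sum>i<n. \<integral>S. f (A S) (S i) \<partial>ghost_sample_measure D n) / real n"
proof -
  have loss_meas: "(\<lambda>S. f (A S) (S j)) \<in> borel_measurable (sample_measure D n)" if "j < n" for j
  proof -
    have "(\<lambda>S. S j) \<in> measurable (sample_measure D n) D"
      using that by (simp add: sample_measure_def)
    from measurable_compose[OF measurable_Pair[OF A_meas this] f_meas] show ?thesis by simp
  qed
  have emp_meas: "(\<lambda>S. emp_risk n f S (A S)) \<in> borel_measurable (PiM {..<n} (\<lambda>_. D))"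
    unfolding emp_risk_def using loss_meas by (simp add: sample_measure_def)
  have emp_local: "emp_risk n f (restrict S {..<n}) (A (restrict S {..<n})) = emp_risk n f S (A S)" for S
    using A_local[of "restrict S {..<n}" S] by (simp add: emp_risk_def)
  note subset_transfer = integral_PiM_subset integrable_PiM_subset_iff
  note emp_subset = subset_transfer[where g="\<lambda>S. emp_risk n f S (A S)" and I="insert n {..<n}",
      OF D subset_insertI _ emp_meas emp_local, simplified]
  have emp_integrable: "integrable (ghost_sample_measure D n) (\<lambda>S. emp_risk n f S (A S))"
    unfolding emp_risk_def
    by (intro Bochner_Integration.integrable_divide_zero Bochner_Integration.integrable_sum integrable) auto
  then show "integrable (sample_measure D n) (\<lambda>S. emp_risk n f S (A S))"
    using emp_subset by (simp add: sample_measure_def ghost_sample_measure_def)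
  have "(\<integral>S. emp_risk n f S (A S) \<partial>sample_measure D n)
      = (\<integral>S. emp_risk n f S (A S) \<partial>ghost_sample_measure D n)"
    using emp_subset by (simp add: sample_measure_def ghost_sample_measure_def)
  also have "\<dots> = (\<Sum>i<n. \<integral>S. f (A S) (S i) \<partial>ghost_sample_measure D n) / real n"
    unfolding emp_risk_def using integrable by (simp add: Bochner_Integration.integral_sum)
  finally show "(\<integral>S. emp_risk n f S (A S) \<partial>sample_measure D n)
      = (\<Sum>i<n. \<integral>S. f (A S) (S i) \<partial>ghost_sample_measure D n) / real n" .
qed

lemma generalization_gap_replace_one:
  fixes f :: "'w \<Rightarrow> 'z \<Rightarrow> real" and A :: "(nat \<Rightarrow> 'z) \<Rightarrow> 'w"
  assumes D: "prob_space D" and n: "n > 0"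
    and f_meas: "(\<lambda>x. f (fst x) (snd x)) \<in> borel_measurable (N \<Otimes>\<^sub>M D)"
    and A_meas: "A \<in> measurable (sample_measure D n) N"
    and A_local: "\<And>S S'. (\<And>j. j < n \<Longrightarrow> S j = S' j) \<Longrightarrow> A S = A S'"
    and integrable: "\<And>j. j \<le> n \<Longrightarrow> integrable (ghost_sample_measure D n) (\<lambda>S. f (A S) (S j))"
  shows "(\<integral>S. pop_risk D f (A S) - emp_risk n f S (A S) \<partial>sample_measure D n)
       = (\<Sum>i<n. \<integral>S. f (A (S(i := S n))) (S i) - f (A S) (S i) \<partial>ghost_sample_measure D n) / real n"
proof -
  let ?Q = "ghost_sample_measure D n"
  have loss_local: "f (A S) z = f (A S') z" if "\<And>j. j < n \<Longrightarrow> S j = S' j" for S S' z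
    using A_local[OF that] by simp
  have ghost_eq: "(\<integral>S. f (A (S(i := S n))) (S i) \<partial>?Q) = (\<integral>S. f (A S) (S n) \<partial>?Q)"
    and ghost_integrable: "integrable ?Q (\<lambda>S. f (A (S(i := S n))) (S i))" if "i < n" for i
    using integral_replace_one_eval_own[where g="\<lambda>S. f (A S)", OF D that loss_local]
      integrable_replace_one_eval_own[where g="\<lambda>S. f (A S)", OF D that loss_local] integrable[of n]
    by simp_all
  have "(\<integral>S. pop_risk D f (A S) \<partial>sample_measure D n) = (\<integral>S. f (A S) (S n) \<partial>?Q)"
    by (rule integral_pop_risk_ghost_sample[OF D f_meas A_meas A_local integrable[OF order_refl]])
  also have "\<dots> = (\<Sum>i<n. \<integral>S. f (A (S(i := S n))) (S i) \<partial>?Q) / real n"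
    using n by (simp add: ghost_eq)
  finally have pop_eq: "(\<integral>S. pop_risk D f (A S) \<partial>sample_measure D n)
      = (\<Sum>i<n. \<integral>S. f (A (S(i := S n))) (S i) \<partial>?Q) / real n" .
  have "integrable (sample_measure D n) (\<lambda>S. pop_risk D f (A S))"
    by (rule integrable_pop_risk_sample[OF D f_meas A_meas A_local integrable[OF order_refl]])
  then show ?thesis
    using integrable_emp_risk_sample[OF D f_meas A_meas A_local] integral_emp_risk_sample[OF D f_meas A_meas A_local]
      pop_eq integrable ghost_integrable
    by (simp add: sum_subtractf diff_divide_distrib)
qed

section \<open>Gradient descent on a smooth non-negative loss\<close>

locale smooth_gd =
  fixes f :: "'w::euclidean_space \<Rightarrow> 'z \<Rightarrow> real" and G :: "'w \<Rightarrow> 'z \<Rightarrow> 'w"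
    and beta :: real and eta :: "nat \<Rightarrow> real" and W1 :: 'w and n T :: nat
  assumes grad: "\<And>w z. ((\<lambda>v. f v z) has_derivative (\<lambda>h. G w z \<bullet> h)) (at w)"
    and smooth: "\<And>w u z. norm (G w z - G u z) \<le> beta * norm (w - u)"
    and f_nonneg: "\<And>w z. 0 \<le> f w z"
    and beta_pos: "beta > 0"
    and n_pos: "n > 0"
    and eta_nonneg: "\<And>t. t < T \<Longrightarrow> 0 \<le> eta (Suc t)"
    and beta_eta_le: "\<And>t. t < T \<Longrightarrow> beta * eta (Suc t) \<le> 1"
begin

sublocale loss: nonneg_smooth "\<lambda>v. f v z" "\<lambda>v. G v z" beta for z
  using grad smooth f_nonneg beta_pos by unfold_locales

abbreviation W :: "(nat \<Rightarrow> 'z) \<Rightarrow> nat \<Rightarrow> 'w" where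
  "W S k \<equiv> gd eta G n W1 S k"

definition emp_grad :: "(nat \<Rightarrow> 'z) \<Rightarrow> 'w \<Rightarrow> 'w" where
  "emp_grad S w = (1 / real n) *\<^sub>R (\<Sum>j<n. G w (S j))"

lemma gd_Suc: "W S (Suc k) = W S k - eta (Suc k) *\<^sub>R emp_grad S (W S k)"
  by (simp add: emp_grad_def)

lemma gd_local: "(\<And>j. j < n \<Longrightarrow> S j = S' j) \<Longrightarrow> W S k = W S' k"
  by (induction k) auto

lemma loss_gd_local: "(\<And>j. j < n \<Longrightarrow> S j = S' j) \<Longrightarrow> f (W S t) z = f (W S' t) z"
  using gd_local by metis

lemma emp_risk_nonneg: "0 \<le> emp_risk n f S w"
  unfolding emp_risk_def by (intro divide_nonneg_nonneg sum_nonneg f_nonneg) auto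

lemma emp_risk_upper_bound:
  "emp_risk n f S y \<le> emp_risk n f S x + emp_grad S x \<bullet> (y - x) + beta / 2 * (norm (y - x))\<^sup>2"
proof -
  have "(\<Sum>j<n. f y (S j))
      \<le> (\<Sum>j<n. f x (S j) + G x (S j) \<bullet> (y - x) + beta / 2 * (norm (y - x))\<^sup>2)"
    by (intro sum_mono lipschitz_gradient_upper_bound[OF grad smooth])
  also have "\<dots> = (\<Sum>j<n. f x (S j)) + (\<Sum>j<n. G x (S j)) \<bullet> (y - x) + real n * (beta / 2 * (norm (y - x))\<^sup>2)"
    by (simp add: sum.distrib inner_sum_left)
  finally show ?thesis
    using n_pos by (simp add: emp_risk_def emp_grad_def field_simps)
qed

lemma norm_emp_grad_sq_le: "(norm (emp_grad S w))\<^sup>2 \<le> 2 * beta * emp_risk n f S w"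
  by (rule nonneg_quadratic_upper_bound_gradient[where F="emp_risk n f S" and g="emp_grad S",
        OF emp_risk_upper_bound emp_risk_nonneg beta_pos])

lemma emp_risk_gd_Suc_le:
  assumes "k < T"
  shows "emp_risk n f S (W S (Suc k)) \<le> emp_risk n f S (W S k)"
proof -
  let ?e = "eta (Suc k)" and ?g = "emp_grad S (W S k)"
  have "emp_risk n f S (W S (Suc k)) \<le> emp_risk n f S (W S k) - ?e * (norm ?g)\<^sup>2 + beta / 2 * (?e\<^sup>2 * (norm ?g)\<^sup>2)"
    using emp_risk_upper_bound[of S "W S (Suc k)" "W S k"]
    by (simp only: gd_Suc) (simp add: power2_norm_eq_inner[symmetric] power_mult_distrib)
  also have "\<dots> = emp_risk n f S (W S k) - ?e * (norm ?g)\<^sup>2 * (1 - beta * ?e / 2)"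
    by (simp add: algebra_simps power2_eq_square)
  also have "\<dots> \<le> emp_risk n f S (W S k)"
    using eta_nonneg[OF assms] beta_eta_le[OF assms] by simp
  finally show ?thesis .
qed

lemma emp_risk_gd_le_init: "k \<le> T \<Longrightarrow> emp_risk n f S (W S k) \<le> emp_risk n f S W1"
proof (induction k)
  case (Suc k)
  then show ?case using emp_risk_gd_Suc_le[of k S] by simp
qed simp

lemma norm_gd_minus_init_le:
  "k \<le> T \<Longrightarrow> norm (W S k - W1) \<le> (\<Sum>t<k. eta (Suc t)) * sqrt (2 * beta * emp_risk n f S W1)"
proof (induction k)
  case (Suc k)
  have grad_bound: "norm (emp_grad S (W S k)) \<le> sqrt (2 * beta * emp_risk n f S W1)"
    using norm_emp_grad_sq_le[of S "W S k"] emp_risk_gd_le_init[of k S] Suc.prems beta_pos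
    by (intro real_le_rsqrt) (auto intro: order.trans)
  have "norm (W S (Suc k) - W1) = norm ((W S k - W1) - eta (Suc k) *\<^sub>R emp_grad S (W S k))"
    unfolding gd_Suc by (simp add: algebra_simps)
  also have "\<dots> \<le> norm (W S k - W1) + eta (Suc k) * norm (emp_grad S (W S k))"
    using norm_triangle_ineq4[of "W S k - W1" "eta (Suc k) *\<^sub>R emp_grad S (W S k)"]
      eta_nonneg[of k] Suc.prems by simp
  also have "\<dots> \<le> (\<Sum>t<k. eta (Suc t)) * sqrt (2 * beta * emp_risk n f S W1)
      + eta (Suc k) * sqrt (2 * beta * emp_risk n f S W1)"
    using Suc eta_nonneg[of k] grad_bound by (intro add_mono mult_left_mono) auto
  finally show ?case by (simp add: algebra_simps)
qed simp

lemma loss_gd_le: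
  assumes "k \<le> T"
  shows "f (W S k) z \<le> 2 * f W1 z + 2 * beta\<^sup>2 * (\<Sum>t<T. eta (Suc t))\<^sup>2 * emp_risk n f S W1"
proof -
  have "norm (W S k - W1) \<le> (\<Sum>t<k. eta (Suc t)) * sqrt (2 * beta * emp_risk n f S W1)"
    by (rule norm_gd_minus_init_le[OF assms])
  also have "\<dots> \<le> (\<Sum>t<T. eta (Suc t)) * sqrt (2 * beta * emp_risk n f S W1)"
    using assms eta_nonneg beta_pos emp_risk_nonneg[of S W1] by (intro mult_right_mono sum_mono2) auto
  finally have "(norm (W S k - W1))\<^sup>2 \<le> ((\<Sum>t<T. eta (Suc t)) * sqrt (2 * beta * emp_risk n f S W1))\<^sup>2"
    by (intro power_mono) auto
  also have "\<dots> = (\<Sum>t<T. eta (Suc t))\<^sup>2 * (2 * beta * emp_risk n f S W1)"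
    using beta_pos emp_risk_nonneg[of S W1] by (simp add: power_mult_distrib)
  finally have "beta * (norm (W S k - W1))\<^sup>2 \<le> 2 * beta\<^sup>2 * (\<Sum>t<T. eta (Suc t))\<^sup>2 * emp_risk n f S W1"
    using beta_pos by (simp add: power2_eq_square algebra_simps)
  then show ?thesis
    using loss.le_twice_plus_dist_sq[where z=z and y="W S k" and x=W1] by linarith
qed

end

lemma weighted_Cauchy_Schwarz_sum:
  fixes c v :: "'i \<Rightarrow> real"
  assumes "\<And>t. t \<in> A \<Longrightarrow> 0 \<le> c t"
  shows "(\<Sum>t\<in>A. c t * v t)\<^sup>2 \<le> (\<Sum>t\<in>A. c t) * (\<Sum>t\<in>A. c t * (v t)\<^sup>2)"
proof -
  have "(\<Sum>t\<in>A. sqrt (c t) * (sqrt (c t) * v t))\<^sup>2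
      \<le> (\<Sum>t\<in>A. (sqrt (c t))\<^sup>2) * (\<Sum>t\<in>A. (sqrt (c t) * v t)\<^sup>2)"
    by (rule Cauchy_Schwarz_ineq_sum)
  also have "(\<Sum>t\<in>A. sqrt (c t) * (sqrt (c t) * v t)) = (\<Sum>t\<in>A. c t * v t)"
    using assms by (intro sum.cong) (auto simp: mult.assoc[symmetric])
  also have "(\<Sum>t\<in>A. (sqrt (c t))\<^sup>2) = (\<Sum>t\<in>A. c t)"
    using assms by (intro sum.cong) auto
  also have "(\<Sum>t\<in>A. (sqrt (c t) * v t)\<^sup>2) = (\<Sum>t\<in>A. c t * (v t)\<^sup>2)"
    using assms by (intro sum.cong) (auto simp: power_mult_distrib)
  finally show ?thesis .
qed

context smooth_gd
begin

text \<open>The factor by which a perturbation entering at step \<open>t + 1\<close> has been amplified by step \<open>k\<close>: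
  each gradient step is \<open>(1 + beta * eta)\<close>-Lipschitz in the iterate.\<close>

definition stab_weight :: "nat \<Rightarrow> nat \<Rightarrow> real" where
  "stab_weight k t = eta (Suc t) * (\<Prod>s\<in>{Suc t..<k}. 1 + beta * eta (Suc s))"

lemma stab_weight_Suc: "t < k \<Longrightarrow> stab_weight (Suc k) t = stab_weight k t * (1 + beta * eta (Suc k))"
  unfolding stab_weight_def by (simp add: prod.atLeastLessThan_Suc)

lemma stab_weight_last: "stab_weight (Suc k) k = eta (Suc k)"
  unfolding stab_weight_def by simp

lemma stab_weight_nonneg: "t < T \<Longrightarrow> 0 \<le> stab_weight T t"
  unfolding stab_weight_def using beta_pos eta_nonneg
  by (intro mult_nonneg_nonneg prod_nonneg) (auto intro!: add_nonneg_nonneg)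

lemma sum_stab_weight: "beta * (\<Sum>t<k. stab_weight k t) = (\<Prod>s<k. 1 + beta * eta (Suc s)) - 1"
proof (induction k)
  case (Suc k)
  have "(\<Sum>t<Suc k. stab_weight (Suc k) t) = (\<Sum>t<k. stab_weight k t) * (1 + beta * eta (Suc k)) + eta (Suc k)"
    by (simp add: stab_weight_Suc stab_weight_last sum_distrib_right)
  then have "beta * (\<Sum>t<Suc k. stab_weight (Suc k) t)
      = (beta * (\<Sum>t<k. stab_weight k t)) * (1 + beta * eta (Suc k)) + beta * eta (Suc k)"
    by (simp add: algebra_simps)
  also have "\<dots> = (\<Prod>s<Suc k. 1 + beta * eta (Suc s)) - 1"
    unfolding Suc.IH by (simp add: algebra_simps)
  finally show ?case .
qed simp

lemma norm_gd_replace_Suc_le: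
  assumes i: "i < n" and S': "\<And>j. j < n \<Longrightarrow> j \<noteq> i \<Longrightarrow> S' j = S j" and k: "k < T"
  shows "norm (W S' (Suc k) - W S (Suc k)) \<le> (1 + beta * eta (Suc k)) * norm (W S' k - W S k)
     + eta (Suc k) / real n * (norm (G (W S k) (S i)) + norm (G (W S' k) (S' i)))"
proof -
  let ?d = "norm (W S' k - W S k)" and ?e = "eta (Suc k)"
  let ?a = "norm (G (W S k) (S i)) + norm (G (W S' k) (S' i))"
  let ?X = "(\<Sum>j<n. G (W S' k) (S' j)) - (\<Sum>j<n. G (W S k) (S j))"
  have summand: "norm (G (W S' k) (S' j) - G (W S k) (S j)) \<le> beta * ?d + (if j = i then ?a else 0)"
    if "j < n" for j
  proof (cases "j = i")
    case True
    then show ?thesis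
      using norm_triangle_ineq4[of "G (W S' k) (S' i)" "G (W S k) (S i)"] beta_pos
      by (simp add: add_increasing)
  next
    case False
    then show ?thesis using S'[OF that] smooth by simp
  qed
  have "norm ?X \<le> (\<Sum>j<n. beta * ?d + (if j = i then ?a else 0))"
    unfolding sum_subtractf[symmetric]
    by (rule order.trans[OF norm_sum sum_mono]) (simp add: summand)
  also have "\<dots> = real n * beta * ?d + ?a"
    using i by (simp add: sum.distrib)
  finally have sum_bound: "norm ?X \<le> real n * beta * ?d + ?a" .
  have step_diff: "W S' (Suc k) - W S (Suc k) = (W S' k - W S k) - (?e / real n) *\<^sub>R ?X"
    by (simp add: scaleR_diff_right)
  have "norm (W S' (Suc k) - W S (Suc k)) \<le> ?d + norm ((?e / real n) *\<^sub>R ?X)"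
    unfolding step_diff by (rule norm_triangle_ineq4)
  also have "norm ((?e / real n) *\<^sub>R ?X) = (?e / real n) * norm ?X"
    using eta_nonneg[OF k] by simp
  finally have "norm (W S' (Suc k) - W S (Suc k)) \<le> ?d + (?e / real n) * norm ?X" .
  also have "\<dots> \<le> ?d + (?e / real n) * (real n * beta * ?d + ?a)"
    using eta_nonneg[OF k] sum_bound by (intro add_left_mono mult_left_mono) auto
  also have "\<dots> = (1 + beta * ?e) * ?d + ?e / real n * ?a"
    using n_pos by (simp add: field_simps)
  finally show ?thesis .
qed

lemma norm_gd_replace_le:
  assumes i: "i < n" and S': "\<And>j. j < n \<Longrightarrow> j \<noteq> i \<Longrightarrow> S' j = S j"
  shows "k \<le> T \<Longrightarrow> norm (W S' k - W S k)
     \<le> (1 / real n) * (\<Sum>t<k. stab_weight k t * (norm (G (W S t) (S i)) + norm (G (W S' t) (S' i))))"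
proof (induction k)
  case (Suc k)
  let ?v = "\<lambda>t. norm (G (W S t) (S i)) + norm (G (W S' t) (S' i))"
  have k: "k < T" using Suc.prems by simp
  have "norm (W S' (Suc k) - W S (Suc k)) \<le> (1 + beta * eta (Suc k)) * norm (W S' k - W S k) + eta (Suc k) / real n * ?v k"
    by (rule norm_gd_replace_Suc_le[OF i S' k])
  also have "\<dots> \<le> (1 + beta * eta (Suc k)) * ((1 / real n) * (\<Sum>t<k. stab_weight k t * ?v t)) + eta (Suc k) / real n * ?v k"
    using Suc k eta_nonneg[OF k] beta_pos by (intro add_right_mono mult_left_mono) auto
  also have "\<dots> = (1 / real n) * (\<Sum>t<Suc k. stab_weight (Suc k) t * ?v t)"
  proof -
    have "(\<Sum>t<k. stab_weight (Suc k) t * ?v t) = (1 + beta * eta (Suc k)) * (\<Sum>t<k. stab_weight k t * ?v t)"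
      by (simp add: sum_distrib_left stab_weight_Suc mult_ac)
    then show ?thesis
      by (simp add: stab_weight_last algebra_simps add_divide_distrib)
  qed
  finally show ?case .
qed simp

lemma norm_gd_replace_sq_le:
  assumes i: "i < n" and S': "\<And>j. j < n \<Longrightarrow> j \<noteq> i \<Longrightarrow> S' j = S j"
  shows "(norm (W S' T - W S T))\<^sup>2 \<le> 4 * beta / (real n)\<^sup>2 * (\<Sum>t<T. stab_weight T t) *
           (\<Sum>t<T. stab_weight T t * (f (W S t) (S i) + f (W S' t) (S' i)))"
proof -
  let ?v = "\<lambda>t. norm (G (W S t) (S i)) + norm (G (W S' t) (S' i))"
  let ?c = "stab_weight T"
  have v_sq: "(?v t)\<^sup>2 \<le> 4 * beta * (f (W S t) (S i) + f (W S' t) (S' i))" for t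
  proof -
    have "(?v t)\<^sup>2 \<le> 2 * (norm (G (W S t) (S i)))\<^sup>2 + 2 * (norm (G (W S' t) (S' i)))\<^sup>2"
      using sum_squares_bound[of "norm (G (W S t) (S i))" "norm (G (W S' t) (S' i))"]
      by (simp add: power2_sum)
    also have "\<dots> \<le> 2 * (2 * beta * f (W S t) (S i)) + 2 * (2 * beta * f (W S' t) (S' i))"
      using loss.norm_gradient_sq_le by (intro add_mono mult_left_mono) auto
    finally show ?thesis by (simp add: algebra_simps)
  qed
  let ?K = "\<Sum>t<T. ?c t" and ?L = "\<Sum>t<T. ?c t * (f (W S t) (S i) + f (W S' t) (S' i))"
  have "(\<Sum>t<T. ?c t * ?v t)\<^sup>2 \<le> ?K * (\<Sum>t<T. ?c t * (?v t)\<^sup>2)"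
    using stab_weight_nonneg by (intro weighted_Cauchy_Schwarz_sum) auto
  also have "\<dots> \<le> ?K * (\<Sum>t<T. ?c t * (4 * beta * (f (W S t) (S i) + f (W S' t) (S' i))))"
    using stab_weight_nonneg v_sq by (intro mult_left_mono sum_mono sum_nonneg) auto
  also have "\<dots> = 4 * beta * ?K * ?L"
  proof -
    have "(\<Sum>t<T. ?c t * (4 * beta * (f (W S t) (S i) + f (W S' t) (S' i)))) = 4 * beta * ?L"
      by (simp add: sum_distrib_left mult_ac)
    then show ?thesis by simp
  qed
  finally have weighted_bound: "(\<Sum>t<T. ?c t * ?v t)\<^sup>2 \<le> 4 * beta * ?K * ?L" .
  have "(norm (W S' T - W S T))\<^sup>2 \<le> ((1 / real n) * (\<Sum>t<T. ?c t * ?v t))\<^sup>2"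
    using norm_gd_replace_le[where S=S and S'=S' and k=T, OF i S'] by (intro power_mono) auto
  also have "\<dots> = (\<Sum>t<T. ?c t * ?v t)\<^sup>2 / (real n)\<^sup>2"
    by (simp add: power_divide)
  also have "\<dots> \<le> 4 * beta * ?K * ?L / (real n)\<^sup>2"
    using weighted_bound by (rule divide_right_mono) simp
  finally show ?thesis by simp
qed

lemma loss_gd_replace_le:
  assumes i: "i < n" and S': "\<And>j. j < n \<Longrightarrow> j \<noteq> i \<Longrightarrow> S' j = S j" and mu: "mu > 0"
  shows "\<bar>f (W S' T) (S i) - f (W S T) (S i)\<bar> \<le> mu * f (W S T) (S i)
     + (1 / mu + 1) * (2 * beta\<^sup>2 / (real n)\<^sup>2) * (\<Sum>t<T. stab_weight T t) *
       (\<Sum>t<T. stab_weight T t * (f (W S t) (S i) + f (W S' t) (S' i)))"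
proof -
  have "\<bar>f (W S' T) (S i) - f (W S T) (S i)\<bar>
      \<le> mu * f (W S T) (S i) + beta * (1 / mu + 1) / 2 * (norm (W S' T - W S T))\<^sup>2"
    by (rule loss.abs_diff_le[OF mu])
  also have "\<dots> \<le> mu * f (W S T) (S i) + beta * (1 / mu + 1) / 2 * (4 * beta / (real n)\<^sup>2 *
      (\<Sum>t<T. stab_weight T t) * (\<Sum>t<T. stab_weight T t * (f (W S t) (S i) + f (W S' t) (S' i))))"
    using norm_gd_replace_sq_le[OF i S'] beta_pos mu by (intro add_left_mono mult_left_mono) auto
  also have "\<dots> = mu * f (W S T) (S i) + (1 / mu + 1) * (2 * beta\<^sup>2 / (real n)\<^sup>2) *
      (\<Sum>t<T. stab_weight T t) * (\<Sum>t<T. stab_weight T t * (f (W S t) (S i) + f (W S' t) (S' i)))"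
    by (simp add: power2_eq_square)
  finally show ?thesis .
qed

end

section \<open>Expected generalization gap of gradient descent\<close>

locale smooth_gd_sample = smooth_gd f G beta eta W1 n T
  for f :: "'w::euclidean_space \<Rightarrow> 'z \<Rightarrow> real" and G beta eta W1 n T +
  fixes D :: "'z measure"
  assumes D: "prob_space D"
    and f_meas: "\<And>w. (\<lambda>z. f w z) \<in> borel_measurable D"
    and integrable_init: "integrable D (\<lambda>z. f W1 z)"
begin

lemma loss_measurable_pair[measurable]: "(\<lambda>x. f (fst x) (snd x)) \<in> borel_measurable (borel \<Otimes>\<^sub>M D)"
proof (rule borel_measurable_continuous_measurable_pair[OF _ f_meas])
  show "continuous_on UNIV (\<lambda>w. f w z)" for z
    by (intro continuous_at_imp_continuous_on ballI has_derivative_continuous[OF grad])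
qed

lemma grad_measurable_pair[measurable]: "(\<lambda>x. G (fst x) (snd x)) \<in> borel_measurable (borel \<Otimes>\<^sub>M D)"
proof (rule borel_measurable_continuous_measurable_pair)
  show "continuous_on UNIV (\<lambda>w. G w z)" for z
    by (rule lipschitz_on_continuous_on[where L=beta], rule lipschitz_onI)
       (use smooth beta_pos in \<open>auto simp: dist_norm\<close>)
  show "(\<lambda>z. G w z) \<in> borel_measurable D" for w
    by (rule borel_measurable_gradient[OF grad f_meas])
qed

lemma gd_measurable:
  assumes I: "{..<n} \<subseteq> I"
  shows "(\<lambda>S. W S k) \<in> borel_measurable (PiM I (\<lambda>_. D))"
proof (induction k)
  case (Suc k)
  have [measurable]: "(\<lambda>S. G (W S k) (S j)) \<in> borel_measurable (PiM I (\<lambda>_. D))" if "j < n" for j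
    using measurable_compose[OF measurable_Pair[OF Suc measurable_component_singleton] grad_measurable_pair]
      that I by auto
  note Suc[measurable]
  show ?case by simp measurable
qed simp

lemma loss_gd_measurable:
  assumes "{..<n} \<subseteq> I" and "j \<in> I"
  shows "(\<lambda>S. f (W S k) (S j)) \<in> borel_measurable (PiM I (\<lambda>_. D))"
  using measurable_compose[OF measurable_Pair[OF gd_measurable measurable_component_singleton]
      loss_measurable_pair] assms by auto

lemma loss_gd_measurable_ghost:
  "j \<le> n \<Longrightarrow> (\<lambda>S. f (W S k) (S j)) \<in> borel_measurable (ghost_sample_measure D n)"
  unfolding ghost_sample_measure_def by (intro loss_gd_measurable) auto

lemma integrable_loss_init:
  assumes "j \<le> n"
  shows "integrable (ghost_sample_measure D n) (\<lambda>S. f W1 (S j))"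
proof -
  have j: "j \<in> insert n {..<n}"
    using assms by auto
  have "distr (PiM (insert n {..<n}) (\<lambda>_. D)) D (\<lambda>S. S j) = D"
    using D j by (intro distr_PiM_component) auto
  then show ?thesis
    using integrable_distr_eq[OF measurable_component_singleton[OF j] f_meas] integrable_init
    by (simp add: ghost_sample_measure_def)
qed

lemma integrable_emp_risk_init: "integrable (ghost_sample_measure D n) (\<lambda>S. emp_risk n f S W1)"
  unfolding emp_risk_def
  by (intro Bochner_Integration.integrable_divide_zero Bochner_Integration.integrable_sum
      integrable_loss_init) auto

lemma integrable_loss_gd:
  assumes j: "j \<le> n" and t: "t \<le> T"
  shows "integrable (ghost_sample_measure D n) (\<lambda>S. f (W S t) (S j))"
proof (rule Bochner_Integration.integrable_bound)
  let ?c = "2 * beta\<^sup>2 * (\<Sum>t<T. eta (Suc t))\<^sup>2"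
  show "integrable (ghost_sample_measure D n) (\<lambda>S. 2 * f W1 (S j) + ?c * emp_risk n f S W1)"
    using j by (intro Bochner_Integration.integrable_add Bochner_Integration.integrable_mult_right
        integrable_loss_init integrable_emp_risk_init)
  show "(\<lambda>S. f (W S t) (S j)) \<in> borel_measurable (ghost_sample_measure D n)"
    using j by (rule loss_gd_measurable_ghost)
  show "AE S in ghost_sample_measure D n. norm (f (W S t) (S j)) \<le> norm (2 * f W1 (S j) + ?c * emp_risk n f S W1)"
  proof (rule AE_I2)
    fix S
    have "0 \<le> 2 * f W1 (S j) + ?c * emp_risk n f S W1"
      using f_nonneg emp_risk_nonneg by (intro add_nonneg_nonneg mult_nonneg_nonneg) auto
    then show "norm (f (W S t) (S j)) \<le> norm (2 * f W1 (S j) + ?c * emp_risk n f S W1)"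
      using loss_gd_le[OF t, of S "S j"] f_nonneg by simp
  qed
qed

lemma
  assumes i: "i < n" and t: "t \<le> T"
  shows integrable_loss_gd_replace_own:
      "integrable (ghost_sample_measure D n) (\<lambda>S. f (W (S(i := S n)) t) (S i))"
    and integrable_loss_gd_replace_ghost:
      "integrable (ghost_sample_measure D n) (\<lambda>S. f (W (S(i := S n)) t) (S n))"
    and integral_loss_gd_replace_ghost:
      "(\<integral>S. f (W (S(i := S n)) t) (S n) \<partial>ghost_sample_measure D n)
         = (\<integral>S. f (W S t) (S i) \<partial>ghost_sample_measure D n)"
  using integrable_replace_one_eval_own[where g="\<lambda>S. f (W S t)", OF D i loss_gd_local]
    integrable_replace_one_eval_ghost[where g="\<lambda>S. f (W S t)", OF D i loss_gd_local]
    integral_replace_one_eval_ghost[where g="\<lambda>S. f (W S t)", OF D i loss_gd_local]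
    integrable_loss_gd[of n t] integrable_loss_gd[of i t] loss_gd_measurable_ghost[of i t] i t
  by simp_all

lemma abs_integral_loss_replace_le:
  assumes i: "i < n" and mu: "mu > 0"
  shows "\<bar>\<integral>S. f (W (S(i := S n)) T) (S i) - f (W S T) (S i) \<partial>ghost_sample_measure D n\<bar>
    \<le> mu * (\<integral>S. f (W S T) (S i) \<partial>ghost_sample_measure D n)
      + (1 / mu + 1) * (4 * beta\<^sup>2 / (real n)\<^sup>2) * (\<Sum>t<T. stab_weight T t) *
        (\<Sum>t<T. stab_weight T t * (\<integral>S. f (W S t) (S i) \<partial>ghost_sample_measure D n))"
proof -
  let ?Q = "ghost_sample_measure D n" and ?w = "stab_weight T"
  let ?c = "(1 / mu + 1) * (2 * beta\<^sup>2 / (real n)\<^sup>2) * (\<Sum>t<T. ?w t)"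
  let ?loss = "\<lambda>t S. f (W S t) (S i)" and ?ghost = "\<lambda>t S. f (W (S(i := S n)) t) (S n)"
  let ?replaced = "\<lambda>S. f (W (S(i := S n)) T) (S i)"
  let ?bound = "\<lambda>S. mu * ?loss T S + ?c * (\<Sum>t<T. ?w t * (?loss t S + ?ghost t S))"
  have loss_int: "integrable ?Q (?loss t)" if "t \<le> T" for t
    using integrable_loss_gd i that by simp
  note ghost_int = integrable_loss_gd_replace_ghost[OF i]
  have summand_int: "integrable ?Q (\<lambda>S. ?w t * (?loss t S + ?ghost t S))" if "t \<in> {..<T}" for t
    using loss_int ghost_int that
    by (intro Bochner_Integration.integrable_mult_right Bochner_Integration.integrable_add) auto
  have sum_int: "integrable ?Q (\<lambda>S. \<Sum>t<T. ?w t * (?loss t S + ?ghost t S))"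
    using summand_int by (intro Bochner_Integration.integrable_sum) auto
  have bound_int: "integrable ?Q ?bound"
    using loss_int[of T] sum_int
    by (intro Bochner_Integration.integrable_add Bochner_Integration.integrable_mult_right) auto
  have "(\<integral>S. ?bound S \<partial>?Q) = (\<integral>S. mu * ?loss T S \<partial>?Q) + (\<integral>S. ?c * (\<Sum>t<T. ?w t * (?loss t S + ?ghost t S)) \<partial>?Q)"
    using loss_int[of T] sum_int by (intro Bochner_Integration.integral_add) auto
  also have "\<dots> = mu * (\<integral>S. ?loss T S \<partial>?Q) + ?c * (\<Sum>t<T. \<integral>S. ?w t * (?loss t S + ?ghost t S) \<partial>?Q)"
    by (simp only: integral_mult_right_zero Bochner_Integration.integral_sum[OF summand_int])
  also have "(\<Sum>t<T. \<integral>S. ?w t * (?loss t S + ?ghost t S) \<partial>?Q)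
      = (\<Sum>t<T. ?w t * ((\<integral>S. ?loss t S \<partial>?Q) + (\<integral>S. ?ghost t S \<partial>?Q)))"
    using loss_int ghost_int by (intro sum.cong) simp_all
  finally have bound_eq: "(\<integral>S. ?bound S \<partial>?Q)
      = mu * (\<integral>S. ?loss T S \<partial>?Q) + ?c * (\<Sum>t<T. ?w t * ((\<integral>S. ?loss t S \<partial>?Q) + (\<integral>S. ?ghost t S \<partial>?Q)))" .
  have pointwise: "\<bar>?replaced S - ?loss T S\<bar> \<le> ?bound S" for S
    using loss_gd_replace_le[of i "S(i := S n)" S mu] i mu by (simp add: mult.assoc)
  have "\<bar>\<integral>S. ?replaced S - ?loss T S \<partial>?Q\<bar> \<le> (\<integral>S. \<bar>?replaced S - ?loss T S\<bar> \<partial>?Q)"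
    using integral_norm_bound[of ?Q "\<lambda>S. ?replaced S - ?loss T S"] by simp
  also have "\<dots> \<le> (\<integral>S. ?bound S \<partial>?Q)"
    using integrable_loss_gd_replace_own[OF i] loss_int[of T] bound_int pointwise
    by (intro integral_mono) auto
  also have "\<dots> = mu * (\<integral>S. ?loss T S \<partial>?Q) + ?c * (\<Sum>t<T. ?w t * ((\<integral>S. ?loss t S \<partial>?Q) + (\<integral>S. ?ghost t S \<partial>?Q)))"
    by (rule bound_eq)
  also have "\<dots> = mu * (\<integral>S. ?loss T S \<partial>?Q)
      + (1 / mu + 1) * (4 * beta\<^sup>2 / (real n)\<^sup>2) * (\<Sum>t<T. ?w t) * (\<Sum>t<T. ?w t * (\<integral>S. ?loss t S \<partial>?Q))"
    by (simp add: integral_loss_gd_replace_ghost[OF i] sum_distrib_left algebra_simps)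
  finally show ?thesis .
qed

lemma
  assumes "k \<le> T"
  shows integrable_emp_risk_gd: "integrable (sample_measure D n) (\<lambda>S. emp_risk n f S (W S k))"
    and integral_emp_risk_gd: "(\<integral>S. emp_risk n f S (W S k) \<partial>sample_measure D n)
      = (\<Sum>i<n. \<integral>S. f (W S k) (S i) \<partial>ghost_sample_measure D n) / real n"
  using gd_measurable[of "{..<n}" k] integrable_loss_gd assms
    integrable_emp_risk_sample[OF D loss_measurable_pair _ gd_local]
    integral_emp_risk_sample[OF D loss_measurable_pair _ gd_local]
  by (simp_all add: sample_measure_def)

lemma mean_loss_gd_le_init:
  assumes t: "t \<le> T"
  shows "(\<Sum>i<n. \<integral>S. f (W S t) (S i) \<partial>ghost_sample_measure D n) / real n
    \<le> (\<integral>S. emp_risk n f S W1 \<partial>sample_measure D n)"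
  using integrable_emp_risk_gd[OF t] integrable_emp_risk_gd[of 0] emp_risk_gd_le_init[OF t]
  by (simp add: integral_emp_risk_gd[OF t, symmetric] integral_mono)

lemma abs_generalization_gap_le:
  assumes mu: "mu > 0"
  shows "\<bar>\<integral>S. pop_risk D f (W S T) - emp_risk n f S (W S T) \<partial>sample_measure D n\<bar>
    \<le> (mu + (1 / mu + 1) * (2 * ((\<Prod>s<T. 1 + beta * eta (Suc s)) - 1) / real n)\<^sup>2)
      * (\<integral>S. emp_risk n f S W1 \<partial>sample_measure D n)"
proof -
  let ?Q = "ghost_sample_measure D n" and ?w = "stab_weight T" and ?K = "\<Sum>t<T. stab_weight T t"
  let ?rho = "\<integral>S. emp_risk n f S W1 \<partial>sample_measure D n"
  let ?e = "\<lambda>t i. \<integral>S. f (W S t) (S i) \<partial>?Q"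
  let ?c = "(1 / mu + 1) * (4 * beta\<^sup>2 / (real n)\<^sup>2) * ?K"
  have gap_eq: "(\<integral>S. pop_risk D f (W S T) - emp_risk n f S (W S T) \<partial>sample_measure D n)
      = (\<Sum>i<n. \<integral>S. f (W (S(i := S n)) T) (S i) - f (W S T) (S i) \<partial>?Q) / real n"
    using gd_measurable[of "{..<n}" T] integrable_loss_gd
    by (intro generalization_gap_replace_one[OF D n_pos loss_measurable_pair] gd_local)
      (auto simp: sample_measure_def)
  have c_nonneg: "0 \<le> ?c"
    using mu stab_weight_nonneg by (intro mult_nonneg_nonneg sum_nonneg) auto
  have "\<bar>\<integral>S. pop_risk D f (W S T) - emp_risk n f S (W S T) \<partial>sample_measure D n\<bar>
      \<le> (\<Sum>i<n. \<bar>\<integral>S. f (W (S(i := S n)) T) (S i) - f (W S T) (S i) \<partial>?Q\<bar>) / real n"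
    unfolding gap_eq by (simp add: divide_right_mono)
  also have "\<dots> \<le> (\<Sum>i<n. mu * ?e T i + ?c * (\<Sum>t<T. ?w t * ?e t i)) / real n"
    using abs_integral_loss_replace_le[OF _ mu] by (intro divide_right_mono sum_mono) auto
  also have "\<dots> = mu * ((\<Sum>i<n. ?e T i) / real n) + ?c * (\<Sum>t<T. ?w t * ((\<Sum>i<n. ?e t i) / real n))"
    by (simp add: sum.distrib sum_distrib_left sum_divide_distrib sum.swap[of _ "{..<n}"] add_divide_distrib)
  also have "\<dots> \<le> mu * ?rho + ?c * (\<Sum>t<T. ?w t * ?rho)"
    using mu c_nonneg stab_weight_nonneg mean_loss_gd_le_init
    by (intro add_mono mult_left_mono sum_mono) auto
  also have "\<dots> = (mu + (1 / mu + 1) * (2 * (beta * ?K) / real n)\<^sup>2) * ?rho"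
    by (simp add: sum_distrib_right[symmetric] power_divide power2_eq_square algebra_simps)
  finally show ?thesis
    by (simp only: sum_stab_weight)
qed

end

lemma prod_one_plus_le_powr:
  fixes e :: "nat \<Rightarrow> real"
  assumes T: "T \<ge> 1" and b: "b \<ge> 0"
    and e_nonneg: "\<And>t. 1 \<le> t \<Longrightarrow> t \<le> T \<Longrightarrow> 0 \<le> e t"
    and e_le: "\<And>t. 1 \<le> t \<Longrightarrow> t \<le> T \<Longrightarrow> e t \<le> C / real t"
  shows "(\<Prod>s<T. 1 + b * e (Suc s)) \<le> (exp 1 * real T) powr (b * C)"
proof -
  have C: "0 \<le> C"
    using e_nonneg[of 1] e_le[of 1] T by force
  have "(\<Prod>s<T. 1 + b * e (Suc s)) \<le> (\<Prod>s<T. exp (b * e (Suc s)))"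
    using b e_nonneg by (intro prod_mono) (auto intro!: exp_ge_add_one_self)
  also have "\<dots> = exp (\<Sum>s<T. b * e (Suc s))"
    by (simp add: exp_sum)
  also have "(\<Sum>s<T. b * e (Suc s)) \<le> (\<Sum>s<T. b * (C / real (Suc s)))"
  proof (intro sum_mono mult_left_mono[OF _ b])
    fix s assume "s \<in> {..<T}"
    then show "e (Suc s) \<le> C / real (Suc s)"
      using e_le[of "Suc s"] by simp
  qed
  also have "\<dots> = b * C * harm T"
    by (simp add: harm_altdef sum_distrib_left divide_inverse mult.assoc)
  also have "harm T \<le> 1 + ln (real T)"
    using euler_mascheroni_sequence_decreasing[of 1 T] T by (simp add: harm_def)
  also have "exp (b * C * (1 + ln (real T))) = (exp 1 * real T) powr (b * C)"
    using T by (simp add: powr_def ln_mult mult.commute)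
  finally show ?thesis
    using b C by (simp add: mult_left_mono)
qed

lemma gap_constant_choice_le:
  fixes X E L n :: real
  assumes n: "0 < n" and X: "0 \<le> X" "X \<le> E" and L: "1 \<le> L"
  shows "2 * E / n + (1 / (2 * E / n) + 1) * (2 * X / n)\<^sup>2
    \<le> 8 * sqrt 3 / n * sqrt L * E + 48 / n\<^sup>2 * L * E\<^sup>2"
proof (cases "E = 0")
  case False
  then have E: "0 < E" using X by linarith
  have X_sq: "X\<^sup>2 \<le> E\<^sup>2"
    using X by (intro power_mono) auto
  have "1 / (2 * E / n) * (2 * X / n)\<^sup>2 = 2 * X\<^sup>2 / (n * E)"
    using n E by (simp add: field_simps power2_eq_square)
  also have "\<dots> \<le> 2 * E / n"
    using X_sq n E by (simp add: field_simps power2_eq_square)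
  finally have mixed: "1 / (2 * E / n) * (2 * X / n)\<^sup>2 \<le> 2 * E / n" .
  have "(2 * X / n)\<^sup>2 \<le> 4 * E\<^sup>2 / n\<^sup>2"
    using X_sq n by (simp add: power_divide power_mult_distrib divide_right_mono)
  also have "\<dots> \<le> 48 / n\<^sup>2 * L * E\<^sup>2"
    using mult_right_mono[of 4 "48 * L" "E\<^sup>2"] L n by (simp add: field_simps)
  finally have square: "(2 * X / n)\<^sup>2 \<le> 48 / n\<^sup>2 * L * E\<^sup>2" .
  have "1 \<le> sqrt 3 * sqrt L"
    using L by (simp add: real_sqrt_mult[symmetric])
  then have "4 * E / n \<le> 8 * sqrt 3 / n * sqrt L * E"
    using n E by (simp add: field_simps)
  then show ?thesis
    using mixed square by (simp add: distrib_right)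
qed (use X in auto)

theorem corollary9:
  fixes D :: "'z measure"
    and f :: "'w::euclidean_space \<Rightarrow> 'z \<Rightarrow> real"
    and G :: "'w \<Rightarrow> 'z \<Rightarrow> 'w"
    and eta :: "nat \<Rightarrow> real"
    and W1 :: 'w
    and beta C :: real
    and n T :: nat
  assumes D: "prob_space D"
    and f_meas: "\<And>w. (\<lambda>z. f w z) \<in> borel_measurable D"
    and f_nonneg: "\<And>w z. f w z \<ge> 0"
    and grad: "\<And>w z. ((\<lambda>v. f v z) has_derivative (\<lambda>h. G w z \<bullet> h)) (at w)"
    and smooth: "\<And>w u z. norm (G w z - G u z) \<le> beta * norm (w - u)"
    and beta_pos: "beta > 0"
    and n_pos: "n > 0"
    and T_pos: "T \<ge> 1"
    and eta_nonneg: "\<And>t. 1 \<le> t \<Longrightarrow> t \<le> T + 1 \<Longrightarrow> 0 \<le> eta t"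
    and eta_le: "\<And>t. 1 \<le> t \<Longrightarrow> t \<le> T + 1 \<Longrightarrow> eta t \<le> C / real t"
    and C_le: "\<And>t. 1 \<le> t \<Longrightarrow> t \<le> T + 1 \<Longrightarrow> C / real t \<le> 1 / beta"
    and eps: "beta * C < 1"
    and integrable_init: "integrable D (\<lambda>z. f W1 z)"
  shows "\<bar>\<integral>S. pop_risk D f (gd eta G n W1 S T) - emp_risk n f S (gd eta G n W1 S T)
              \<partial>sample_measure D n\<bar>
         \<le> (8 * sqrt 3 / real n * sqrt (ln (exp 1 * real T)) * (exp 1 * real T) powr (beta * C)
            + 48 / (real n)^2 * ln (exp 1 * real T) * (exp 1 * real T) powr (2 * (beta * C)))
           * (\<integral>S. emp_risk n f S W1 \<partial>sample_measure D n)"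
proof -
  have eta_Suc_nonneg: "0 \<le> eta (Suc t)" if "t < T" for t
    using eta_nonneg[of "Suc t"] that by simp
  have beta_eta_Suc_le: "beta * eta (Suc t) \<le> 1" if "t < T" for t
    using order.trans[OF eta_le[of "Suc t"] C_le[of "Suc t"]] that beta_pos by (simp add: field_simps)
  define E where "E = (exp 1 * real T) powr (beta * C)"
  define X where "X = (\<Prod>s<T. 1 + beta * eta (Suc s)) - 1"
  have "X + 1 \<le> E"
    unfolding X_def E_def using beta_pos eta_nonneg eta_le by (simp add: prod_one_plus_le_powr[OF T_pos])
  then have X: "0 \<le> X" "X \<le> E" and E_pos: "0 < E"
    using beta_pos eta_Suc_nonneg T_pos by (auto simp: X_def E_def intro!: prod_ge_1)
  interpret smooth_gd_sample f G beta eta W1 n T D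
    by (intro smooth_gd_sample.intro smooth_gd.intro smooth_gd_sample_axioms.intro)
      (fact grad smooth f_nonneg beta_pos n_pos eta_Suc_nonneg beta_eta_Suc_le D f_meas integrable_init)+
  have "\<bar>\<integral>S. pop_risk D f (W S T) - emp_risk n f S (W S T) \<partial>sample_measure D n\<bar>
      \<le> (2 * E / n + (1 / (2 * E / n) + 1) * (2 * X / n)\<^sup>2) * (\<integral>S. emp_risk n f S W1 \<partial>sample_measure D n)"
    using abs_generalization_gap_le[of "2 * E / n"] E_pos n_pos by (simp add: X_def)
  also have "\<dots> \<le> (8 * sqrt 3 / n * sqrt (ln (exp 1 * real T)) * E + 48 / n\<^sup>2 * ln (exp 1 * real T) * E\<^sup>2)
      * (\<integral>S. emp_risk n f S W1 \<partial>sample_measure D n)"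
    using gap_constant_choice_le[OF _ X, of "real n" "ln (exp 1 * real T)"] n_pos T_pos emp_risk_nonneg
    by (intro mult_right_mono) (simp_all add: ln_mult integral_nonneg)
  also have "E\<^sup>2 = (exp 1 * real T) powr (2 * (beta * C))"
    by (simp add: E_def power2_eq_square powr_add[symmetric] mult.commute)
  finally show ?thesis
    by (simp add: E_def)
qed

end
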